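(* Let $\mathcal{M}$ be a separable metric space, $f:\mathcal{M}\to\mathcal{M}$ continuous, and $\mathcal{X}\subseteq\mathcal{M}$ forward invariant under $f$ and path connected. Consider $x_{k+1}=f(x_k)$ on $\mathcal{X}$, with $\mathcal{W}$ its set of $\omega$-limit sets. Suppose: (T1') there exist a separable metric space $\mathcal{Z}$, a continuous map $g:\mathcal{Z}\to\mathcal{Z}$ such that $z_{k+1}=g(z_k)$ on $\mathcal{Z}$ has closed basins, and a continuous map $F:\mathcal{X}\to\mathcal{Z}$ with $F\circ f=g\circ F$ on $\mathcal{X}$; (T2') every trajectory of $x_{k+1}=f(x_k)$ on $\mathcal{X}$ is forward precompact in $\mathcal{X}$; (T3') $\mathcal{W}$ is countable. Then the set $\{F(\Omega)\mid\Omega\in\mathcal{W}\}$ has exactly one element.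
   Context: The forward orbit of $\xi$ is $\{f^k(\xi)\mid k\in\mathbb{N}\}$; the trajectory through $\xi$ is forward precompact in $\mathcal{X}$ if the closure in $\mathcal{X}$ of its forward orbit is compact. $\omega_{\mathcal{X}}(\xi)$ is the set of $x\in\mathcal{X}$ such that $f^{k_j}(\xi)\to x$ for some indices $k_j\to\infty$; $\mathcal{W}=\{\omega_{\mathcal{X}}(\xi)\mid\xi\in\mathcal{X}\}$. For the system $z_{k+1}=g(z_k)$ on $\mathcal{Z}$, $\omega_{\mathcal{Z}}$ and its set of $\omega$-limit sets are defined analogously, and the domain of attraction of an $\omega$-limit set $\Omega$ is $D^+_{\mathcal{Z}}(\Omega)=\{\zeta\in\mathcal{Z}\mid\omega_{\mathcal{Z}}(\zeta)=\Omega\}$; the system has closed basins if $D^+_{\mathcal{Z}}(\Omega)$ is closed for every $\omega$-limit set $\Omega$ of that system. *)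

theory Defs
  imports "HOL-Analysis.Analysis"
begin

definition forward_orbit :: "('a \<Rightarrow> 'a) \<Rightarrow> 'a \<Rightarrow> 'a set" where
  "forward_orbit f xi = {(f ^^ k) xi | k. True}"

definition omega_limit :: "'a set \<Rightarrow> ('a \<Rightarrow> 'a) \<Rightarrow> 'a::topological_space \<Rightarrow> 'a set" where
  "omega_limit S f xi = {x \<in> S. \<exists>k::nat \<Rightarrow> nat. filterlim k at_top sequentially \<and>
      ((\<lambda>j. (f ^^ k j) xi) \<longlongrightarrow> x) sequentially}"

definition omega_limit_sets :: "'a set \<Rightarrow> ('a \<Rightarrow> 'a) \<Rightarrow> 'a::topological_space set set" where
  "omega_limit_sets S f = {omega_limit S f xi | xi. xi \<in> S}"

text \<open>Trajectory through xi is forward precompact in S: the closure in S of its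
  forward orbit (i.e. S intersected with the closure) is compact.\<close>
definition forward_precompact :: "'a set \<Rightarrow> ('a \<Rightarrow> 'a) \<Rightarrow> 'a::topological_space \<Rightarrow> bool" where
  "forward_precompact S f xi \<longleftrightarrow> compact (S \<inter> closure (forward_orbit f xi))"

definition domain_attraction :: "'a set \<Rightarrow> ('a \<Rightarrow> 'a) \<Rightarrow> 'a set \<Rightarrow> 'a::topological_space set" where
  "domain_attraction S f Omega = {z \<in> S. omega_limit S f z = Omega}"

definition closed_basins :: "('a::topological_space \<Rightarrow> 'a) \<Rightarrow> bool" where
  "closed_basins g \<longleftrightarrow>
     (\<forall>Omega \<in> omega_limit_sets UNIV g. closed (domain_attraction UNIV g Omega))"

end

theory Submission imports Defs begin

text \<open>
  By precompactness of the trajectories, the semiconjugacy F maps the \<omega>-limit set of \<xi> onto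
  the \<omega>-limit set of F \<xi> under g. Hence the level sets of \<xi> \<mapsto> F(\<omega>(\<xi>)) on X are preimages of
  basins of g under F, which are closed, and there are only countably many of them. Along a
  path in X they partition [0, 1] into countably many disjoint nonempty closed sets, so by
  Sierpinski's theorem there is only one: F(\<omega>(\<xi>)) does not depend on \<xi>.
\<close>

lemma funpow_mem_invariant:
  assumes "f ` X \<subseteq> X" "x \<in> X"
  shows "(f ^^ k) x \<in> X"
  using assms by (induction k) auto

lemma funpow_semiconj:
  assumes "f ` X \<subseteq> X" "x \<in> X" "\<And>y. y \<in> X \<Longrightarrow> F (f y) = g (F y)"
  shows "F ((f ^^ k) x) = (g ^^ k) (F x)"
  using assms by (induction k) (auto simp: funpow_mem_invariant)

lemma image_omega_limit_subset:
  assumes X_inv: "f ` X \<subseteq> X" and xi: "xi \<in> X"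
    and F_cont: "continuous_on X F"
    and F_conj: "\<And>x. x \<in> X \<Longrightarrow> F (f x) = g (F x)"
  shows "F ` omega_limit X f xi \<subseteq> omega_limit UNIV g (F xi)"
proof
  fix z assume "z \<in> F ` omega_limit X f xi"
  then obtain x k where x: "x \<in> X" "z = F x" and k: "filterlim k at_top sequentially"
    and lim: "((\<lambda>j. (f ^^ k j) xi) \<longlongrightarrow> x) sequentially"
    unfolding omega_limit_def by auto
  have "((\<lambda>j. F ((f ^^ k j) xi)) \<longlongrightarrow> F x) sequentially"
    using continuous_on_tendsto_compose[OF F_cont lim x(1)]
    by (simp add: funpow_mem_invariant[OF X_inv xi])
  then have "((\<lambda>j. (g ^^ k j) (F xi)) \<longlongrightarrow> z) sequentially"
    using funpow_semiconj[where F=F and g=g, OF X_inv xi F_conj] x(2) by simp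
  with k show "z \<in> omega_limit UNIV g (F xi)"
    unfolding omega_limit_def by auto
qed

lemma omega_limit_subset_image:
  fixes f :: "'a::first_countable_topology \<Rightarrow> 'a" and g :: "'b::t2_space \<Rightarrow> 'b"
  assumes X_inv: "f ` X \<subseteq> X" and xi: "xi \<in> X"
    and F_cont: "continuous_on X F"
    and F_conj: "\<And>x. x \<in> X \<Longrightarrow> F (f x) = g (F x)"
    and precompact: "forward_precompact X f xi"
  shows "omega_limit UNIV g (F xi) \<subseteq> F ` omega_limit X f xi"
proof
  fix z assume "z \<in> omega_limit UNIV g (F xi)"
  then obtain k where k: "filterlim k at_top sequentially"
    and lim_g: "((\<lambda>j. (g ^^ k j) (F xi)) \<longlongrightarrow> z) sequentially"
    unfolding omega_limit_def by auto
  define K where "K = X \<inter> closure (forward_orbit f xi)"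
  have "seq_compact K"
    using precompact compact_imp_seq_compact unfolding forward_precompact_def K_def by blast
  moreover have "\<forall>j. (f ^^ k j) xi \<in> K"
  proof
    fix j
    have "(f ^^ k j) xi \<in> forward_orbit f xi"
      unfolding forward_orbit_def by blast
    then show "(f ^^ k j) xi \<in> K"
      unfolding K_def using funpow_mem_invariant[OF X_inv xi] closure_subset by blast
  qed
  ultimately obtain x r where "x \<in> K" and r: "strict_mono r"
    and "((\<lambda>j. (f ^^ k j) xi) \<circ> r) \<longlonglongrightarrow> x"
    by (rule seq_compactE)
  then have x: "x \<in> X" and lim_f: "((\<lambda>j. (f ^^ k (r j)) xi) \<longlongrightarrow> x) sequentially"
    by (auto simp: K_def o_def)
  have kr: "filterlim (\<lambda>j. k (r j)) at_top sequentially"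
    using filterlim_compose[OF k filterlim_subseq[OF r]] .
  have "((\<lambda>j. F ((f ^^ k (r j)) xi)) \<longlongrightarrow> F x) sequentially"
    using continuous_on_tendsto_compose[OF F_cont lim_f x]
    by (simp add: funpow_mem_invariant[OF X_inv xi])
  then have "((\<lambda>j. (g ^^ k (r j)) (F xi)) \<longlongrightarrow> F x) sequentially"
    using funpow_semiconj[where F=F and g=g, OF X_inv xi F_conj] by simp
  moreover have "((\<lambda>j. (g ^^ k (r j)) (F xi)) \<longlongrightarrow> z) sequentially"
    using LIMSEQ_subseq_LIMSEQ[OF lim_g r] by (simp add: o_def)
  ultimately have "F x = z"
    by (rule LIMSEQ_unique)
  moreover have "x \<in> omega_limit X f xi"
    unfolding omega_limit_def using x kr lim_f by auto
  ultimately show "z \<in> F ` omega_limit X f xi"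
    by blast
qed

lemma image_omega_limit_semiconj:
  fixes f :: "'a::first_countable_topology \<Rightarrow> 'a" and g :: "'b::t2_space \<Rightarrow> 'b"
  assumes "f ` X \<subseteq> X" "xi \<in> X" "continuous_on X F"
    and "\<And>x. x \<in> X \<Longrightarrow> F (f x) = g (F x)"
    and "forward_precompact X f xi"
  shows "F ` omega_limit X f xi = omega_limit UNIV g (F xi)"
  using image_omega_limit_subset[OF assms(1-4)] omega_limit_subset_image[OF assms]
  by (rule subset_antisym)

lemma path_connected_countable_closed_fibres_constant:
  assumes S: "path_connected S" and countable: "countable (\<phi> ` S)"
    and closed_fibres: "\<And>c. c \<in> \<phi> ` S \<Longrightarrow> closedin (top_of_set S) {x \<in> S. \<phi> x = c}"
    and x: "x \<in> S" and y: "y \<in> S"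
  shows "\<phi> x = \<phi> y"
proof -
  obtain p where p: "path p" "path_image p \<subseteq> S" "pathstart p = x" "pathfinish p = y"
    using S x y unfolding path_connected_def by blast
  have pS: "p ` {0..1} \<subseteq> S"
    using p(2) by (simp add: path_image_def)
  define C where "C c = {t \<in> {0..1::real}. \<phi> (p t) = c}" for c
  define \<U> where "\<U> = C ` \<phi> ` path_image p"
  have "countable \<U>"
    unfolding \<U>_def using countable countable_subset image_mono[OF p(2)] by blast
  moreover have "pairwise disjnt \<U>"
    unfolding \<U>_def C_def by (auto simp: pairwise_def disjnt_def)
  moreover have "closed A \<and> A \<noteq> {}" if A: "A \<in> \<U>" for A
  proof -
    obtain t where t: "t \<in> {0..1}" "A = C (\<phi> (p t))"
      using A unfolding \<U>_def path_image_def by blast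
    have fibre: "closedin (top_of_set S) {x \<in> S. \<phi> x = \<phi> (p t)}"
      using closed_fibres pS t(1) by blast
    have "C (\<phi> (p t)) = {0..1} \<inter> p -` {x \<in> S. \<phi> x = \<phi> (p t)}"
      using pS by (auto simp: C_def)
    also have "closedin (top_of_set {0..1}) \<dots>"
      using p(1) pS fibre unfolding path_def by (intro continuous_closedin_preimage_gen) auto
    finally have "closed A"
      using t(2) closedin_closed_trans by blast
    moreover have "t \<in> A"
      using t by (simp add: C_def)
    ultimately show ?thesis
      by blast
  qed
  moreover have "\<Union>\<U> = {0..1}"
    unfolding \<U>_def C_def path_image_def by auto
  ultimately have "\<U> = {{0..1}}"
    by (intro real_Sierpinski_lemma) auto
  moreover have "C (\<phi> x) \<in> \<U>"
    unfolding \<U>_def using p(3) pathstart_in_path_image by blast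
  ultimately have "1 \<in> C (\<phi> x)"
    by auto
  then show ?thesis
    using p(4) by (simp add: C_def pathfinish_def)
qed

theorem theorem20:
  fixes f :: "'m::metric_space \<Rightarrow> 'm"
    and X :: "'m set"
    and g :: "'z::metric_space \<Rightarrow> 'z"
    and F :: "'m \<Rightarrow> 'z"
  assumes sepM: "separable_space (euclidean :: 'm topology)"
    and f_cont: "continuous_on UNIV f"
    and X_inv: "f ` X \<subseteq> X"
    and X_pc: "path_connected X"
    and X_ne: "X \<noteq> {}"
    and sepZ: "separable_space (euclidean :: 'z topology)"
    and g_cont: "continuous_on UNIV g"
    and g_basins: "closed_basins g"
    and F_cont: "continuous_on X F"
    and F_conj: "\<And>x. x \<in> X \<Longrightarrow> F (f x) = g (F x)"
    and T2: "\<And>xi. xi \<in> X \<Longrightarrow> forward_precompact X f xi"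
    and T3: "countable (omega_limit_sets X f)"
  shows "\<exists>!S. S \<in> {F ` Omega | Omega. Omega \<in> omega_limit_sets X f}"
proof -
  define \<phi> where "\<phi> xi = F ` omega_limit X f xi" for xi
  have \<phi>_eq: "\<phi> xi = omega_limit UNIV g (F xi)" if "xi \<in> X" for xi
    unfolding \<phi>_def using image_omega_limit_semiconj[OF X_inv that F_cont F_conj T2[OF that]] .
  have \<phi>_range: "{F ` Omega | Omega. Omega \<in> omega_limit_sets X f} = \<phi> ` X"
    unfolding \<phi>_def omega_limit_sets_def by auto
  have countable_range: "countable (\<phi> ` X)"
    using countable_image[OF T3, of "image F"] \<phi>_range by (simp add: Setcompr_eq_image)
  have closed_fibres: "closedin (top_of_set X) {x \<in> X. \<phi> x = c}" if "c \<in> \<phi> ` X" for c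
  proof -
    have "c \<in> omega_limit_sets UNIV g"
      using that \<phi>_eq unfolding omega_limit_sets_def by auto
    then have "closed (domain_attraction UNIV g c)"
      using g_basins unfolding closed_basins_def by blast
    moreover have "{x \<in> X. \<phi> x = c} = X \<inter> F -` domain_attraction UNIV g c"
      using \<phi>_eq by (auto simp: domain_attraction_def)
    ultimately show ?thesis
      using continuous_closedin_preimage[OF F_cont] by simp
  qed
  have "\<phi> x = \<phi> y" if "x \<in> X" "y \<in> X" for x y
    using path_connected_countable_closed_fibres_constant[OF X_pc countable_range closed_fibres that] .
  then show ?thesis
    unfolding \<phi>_range using X_ne by blast
qed

end
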